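(* Let $G=(V,E)$ be a finite undirected graph that is triangle-full and 4-clique-free. For $v\in V$ let $N[v]=\{v\}\cup\{v'\in V:\{v,v'\}\in E\}$, let $L_v=(V^*vv)^\omega\cup(V^*(V\setminus N[v]))^\omega\subseteq V^\omega$, and $L_G=\bigcap_{v\in V}L_v$. If there exists a (possibly non-deterministic) complete generalised Büchi automaton over the input alphabet $V$ with three states recognising $L_G$, then $G$ is 3-colourable.
   Context: A finite undirected graph is $G=(V,E)$ with $V$ finite and $E$ a set of 2-element subsets of $V$. A $k$-clique is a set of $k$ pairwise adjacent vertices; $G$ is triangle-full if every vertex lies in a 3-clique, and 4-clique-free if it has no 4-clique. A 3-colouring is a map $c:V\to\{1,2,3\}$ with $c(v)\ne c(v')$ whenever $\{v,v'\}\in E$. For sets $X,Y$ of letters, $(X^*Y)^\omega$ denotes infinite concatenations of words from $X^*Y$. An automaton is a tuple $(Q,\Sigma,q_{\mathrm{init}},\Delta,\Gamma,\mathrm{col},W)$ with finite state set, finite input alphabet $\Sigma$, initial state, transitions $\Delta\subseteq Q\times\Sigma\times Q$, output alphabet $\Gamma$, labelling $\mathrm{col}:\Delta\to\Gamma$, acceptance condition $W\subseteq\Gamma^\omega$. A run on $w=a_1a_2\cdots$ is a sequence $(q_0,a_1,q_1)(q_1,a_2,q_2)\cdots$ of transitions with $q_0=q_{\mathrm{init}}$, accepting if its label sequence is in $W$; the recognised language is the set of words with an accepting run. A generalised Büchi automaton with finite output colour set $C$ has $\Gamma=2^C$ and $W=\{x : \text{every } c\in C \text{ occurs in infinitely many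 letters of } x\}$. Complete: for every $(p,a)\in Q\times\Sigma$ there is at least one $q$ with $(p,a,q)\in\Delta$. *)

theory Defs
  imports Main
begin

definition finite_graph :: "'v set \<Rightarrow> 'v set set \<Rightarrow> bool" where
  "finite_graph V E \<longleftrightarrow> finite V \<and> (\<forall>e\<in>E. e \<subseteq> V \<and> card e = 2)"

definition is_clique :: "'v set set \<Rightarrow> 'v set \<Rightarrow> bool" where
  "is_clique E K \<longleftrightarrow> (\<forall>u\<in>K. \<forall>v\<in>K. u \<noteq> v \<longrightarrow> {u, v} \<in> E)"

definition is_k_clique :: "'v set \<Rightarrow> 'v set set \<Rightarrow> nat \<Rightarrow> 'v set \<Rightarrow> bool" where
  "is_k_clique V E k K \<longleftrightarrow> K \<subseteq> V \<and> card K = k \<and> is_clique E K"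

definition triangle_full :: "'v set \<Rightarrow> 'v set set \<Rightarrow> bool" where
  "triangle_full V E \<longleftrightarrow> (\<forall>v\<in>V. \<exists>K. is_k_clique V E 3 K \<and> v \<in> K)"

definition four_clique_free :: "'v set \<Rightarrow> 'v set set \<Rightarrow> bool" where
  "four_clique_free V E \<longleftrightarrow> \<not> (\<exists>K. is_k_clique V E 4 K)"

definition three_colourable :: "'v set \<Rightarrow> 'v set set \<Rightarrow> bool" where
  "three_colourable V E \<longleftrightarrow>
     (\<exists>c :: 'v \<Rightarrow> nat. (\<forall>v\<in>V. c v \<in> {1, 2, 3}) \<and>
        (\<forall>v\<in>V. \<forall>v'\<in>V. {v, v'} \<in> E \<longrightarrow> c v \<noteq> c v'))"

definition closed_nbhd :: "'v set \<Rightarrow> 'v set set \<Rightarrow> 'v \<Rightarrow> 'v set" where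
  "closed_nbhd V E v = {v} \<union> {v' \<in> V. {v, v'} \<in> E}"

text \<open>Infinite words are functions nat => letter. The omega-power of a set K of
  finite words is the set of infinite concatenations u0 u1 u2 ... of words from K.\<close>

definition omega_power :: "'a list set \<Rightarrow> (nat \<Rightarrow> 'a) set" where
  "omega_power K = {w. \<exists>p :: nat \<Rightarrow> nat. p 0 = 0 \<and> strict_mono p \<and>
                          (\<forall>n. map w [p n..<p (Suc n)] \<in> K)}"

definition star_concat :: "'a set \<Rightarrow> 'a list set \<Rightarrow> 'a list set" where
  "star_concat X Y = {u @ y | u y. set u \<subseteq> X \<and> y \<in> Y}"

definition lang_v :: "'v set \<Rightarrow> 'v set set \<Rightarrow> 'v \<Rightarrow> (nat \<Rightarrow> 'v) set" where
  "lang_v V E v =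
     omega_power (star_concat V {[v, v]}) \<union>
     omega_power (star_concat V {[a] | a. a \<in> V - closed_nbhd V E v})"

text \<open>L_G as a subset of V^omega (for V empty the empty intersection is V^omega, which is empty).\<close>
definition lang_G :: "'v set \<Rightarrow> 'v set set \<Rightarrow> (nat \<Rightarrow> 'v) set" where
  "lang_G V E = {w. range w \<subseteq> V \<and> (\<forall>v\<in>V. w \<in> lang_v V E v)}"

definition is_gba :: "'q set \<Rightarrow> 'a set \<Rightarrow> 'q \<Rightarrow> ('q \<times> 'a \<times> 'q) set \<Rightarrow>
                      ('q \<times> 'a \<times> 'q \<Rightarrow> 'c set) \<Rightarrow> 'c set \<Rightarrow> bool" where
  "is_gba Q \<Sigma> qi \<Delta> col C \<longleftrightarrow> finite Q \<and> finite \<Sigma> \<and> qi \<in> Q \<and> \<Delta> \<subseteq> Q \<times> \<Sigma> \<times> Q \<and>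
      finite C \<and> (\<forall>t\<in>\<Delta>. col t \<subseteq> C)"

definition gba_complete :: "'q set \<Rightarrow> 'a set \<Rightarrow> ('q \<times> 'a \<times> 'q) set \<Rightarrow> bool" where
  "gba_complete Q \<Sigma> \<Delta> \<longleftrightarrow> (\<forall>p\<in>Q. \<forall>a\<in>\<Sigma>. \<exists>q. (p, a, q) \<in> \<Delta>)"

definition is_run :: "'q \<Rightarrow> ('q \<times> 'a \<times> 'q) set \<Rightarrow> (nat \<Rightarrow> 'a) \<Rightarrow> (nat \<Rightarrow> 'q) \<Rightarrow> bool" where
  "is_run qi \<Delta> w r \<longleftrightarrow> r 0 = qi \<and> (\<forall>i. (r i, w i, r (Suc i)) \<in> \<Delta>)"

definition gb_accepting :: "('q \<times> 'a \<times> 'q \<Rightarrow> 'c set) \<Rightarrow> 'c set \<Rightarrow> (nat \<Rightarrow> 'a) \<Rightarrow> (nat \<Rightarrow> 'q) \<Rightarrow> bool" where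
  "gb_accepting col C w r \<longleftrightarrow> (\<forall>c\<in>C. infinite {i. c \<in> col (r i, w i, r (Suc i))})"

definition gba_lang :: "'a set \<Rightarrow> 'q \<Rightarrow> ('q \<times> 'a \<times> 'q) set \<Rightarrow>
                        ('q \<times> 'a \<times> 'q \<Rightarrow> 'c set) \<Rightarrow> 'c set \<Rightarrow> (nat \<Rightarrow> 'a) set" where
  "gba_lang \<Sigma> qi \<Delta> col C =
     {w. range w \<subseteq> \<Sigma> \<and> (\<exists>r. is_run qi \<Delta> w r \<and> gb_accepting col C w r)}"

end

theory Submission
  imports Defs "HOL-Library.Omega_Words_Fun"
begin

text \<open>Call a state q L-cyclic (on_cycle D L q) if it lies on a cycle of transitions reading only
  letters from L. Suppose an accepted lasso reads only letters of the closed neighbourhood N[l].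
  If all its states were (N[l] - {l})-cyclic, inserting such cycles before each of its transitions
  would give an accepted lasso whose word eventually reads only letters of N[l] and never l twice
  in a row, so it would not lie in L_l. For a vertex x of a triangle {x, a, b} the word (x x a a b b)^\<omega> lies in
  L_G because G has no 4-clique; an accepting lasso for it therefore yields states s_x, s_a, s_b
  that are {x, a, b}-cyclic but not {a, b}-, {x, b}- and {x, a}-cyclic respectively. A case
  analysis of complete transition relations on three states shows that these states are distinct,
  so they are all the states, and the {x}-cycle provided by completeness must pass through s_x.
  Hence every vertex v has a {v}-cyclic state that is not (N[v] - {v})-cyclic, adjacent vertices
  get different states, and the three states serve as colours.\<close>

abbreviation letter :: "'q \<times> 'a \<times> 'q \<Rightarrow> 'a" where
  "letter t \<equiv> fst (snd t)"

fun trans_path :: "('q \<times> 'a \<times> 'q) set \<Rightarrow> 'q \<Rightarrow> ('q \<times> 'a \<times> 'q) list \<Rightarrow> 'q \<Rightarrow> bool" where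
  "trans_path D p [] q \<longleftrightarrow> p = q"
| "trans_path D p (t # ts) q \<longleftrightarrow> t \<in> D \<and> fst t = p \<and> trans_path D (snd (snd t)) ts q"

lemma trans_path_append:
  "trans_path D p (ts @ us) q \<longleftrightarrow> (\<exists>m. trans_path D p ts m \<and> trans_path D m us q)"
  by (induction ts arbitrary: p) auto

lemma trans_path_subset: "trans_path D p ts q \<Longrightarrow> set ts \<subseteq> D"
  by (induction ts arbitrary: p) auto

lemma trans_path_link:
  "trans_path D p ts q \<Longrightarrow> Suc i < length ts \<Longrightarrow> snd (snd (ts ! i)) = fst (ts ! Suc i)"
proof (induction ts arbitrary: p i)
  case (Cons t ts)
  then show ?case by (cases i; cases ts) auto
qed simp

lemma trans_path_replicate:
  "trans_path D q ts q \<Longrightarrow> trans_path D q (concat (replicate k ts)) q"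
  by (induction k) (auto simp: trans_path_append)

lemma trans_path_rotate:
  assumes "trans_path D q (ts @ t # us) q"
  shows "trans_path D (fst t) (t # us @ ts) (fst t)"
  using assms by (auto simp: trans_path_append)

lemma trans_path_insert_loops:
  assumes "trans_path D p ts q" "\<forall>t\<in>set ts. trans_path D (fst t) (loop t) (fst t)"
  shows "trans_path D p (concat (map (\<lambda>t. loop t @ [t]) ts)) q"
  using assms by (induction ts arbitrary: p) (auto simp: trans_path_append)

definition letter_step :: "('q \<times> 'a \<times> 'q) set \<Rightarrow> 'a set \<Rightarrow> 'q rel" where
  "letter_step D L = {(p, q). \<exists>a\<in>L. (p, a, q) \<in> D}"

definition on_cycle :: "('q \<times> 'a \<times> 'q) set \<Rightarrow> 'a set \<Rightarrow> 'q \<Rightarrow> bool" where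
  "on_cycle D L q \<longleftrightarrow> (q, q) \<in> (letter_step D L)\<^sup>+"

lemma letter_step_union: "letter_step D (L \<union> L') = letter_step D L \<union> letter_step D L'"
  unfolding letter_step_def by auto

lemma on_cycle_mono: "on_cycle D L q \<Longrightarrow> L \<subseteq> L' \<Longrightarrow> on_cycle D L' q"
  unfolding on_cycle_def letter_step_def by (erule trancl_mono) auto

lemma trancl_letter_step_iff:
  "(p, q) \<in> (letter_step D L)\<^sup>+ \<longleftrightarrow>
     (\<exists>ts. ts \<noteq> [] \<and> trans_path D p ts q \<and> (\<forall>t\<in>set ts. letter t \<in> L))"
proof
  assume "(p, q) \<in> (letter_step D L)\<^sup>+"
  then show "\<exists>ts. ts \<noteq> [] \<and> trans_path D p ts q \<and> (\<forall>t\<in>set ts. letter t \<in> L)"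
  proof (induction rule: trancl_induct)
    case (base q)
    then obtain a where "a \<in> L" "(p, a, q) \<in> D" unfolding letter_step_def by auto
    then show ?case by (intro exI[of _ "[(p, a, q)]"]) auto
  next
    case (step q q')
    then obtain ts a where "ts \<noteq> []" "trans_path D p ts q" "\<forall>t\<in>set ts. letter t \<in> L"
      "a \<in> L" "(q, a, q') \<in> D"
      unfolding letter_step_def by auto
    then show ?case by (intro exI[of _ "ts @ [(q, a, q')]"]) (auto simp: trans_path_append)
  qed
next
  assume "\<exists>ts. ts \<noteq> [] \<and> trans_path D p ts q \<and> (\<forall>t\<in>set ts. letter t \<in> L)"
  then obtain ts where "ts \<noteq> []" "trans_path D p ts q" "\<forall>t\<in>set ts. letter t \<in> L" by blast
  then show "(p, q) \<in> (letter_step D L)\<^sup>+"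
  proof (induction ts arbitrary: p)
    case (Cons t ts)
    then have "(p, snd (snd t)) \<in> letter_step D L"
      unfolding letter_step_def by (cases t) auto
    with Cons show ?case by (cases ts) auto
  qed simp
qed

lemma on_cycle_iff:
  "on_cycle D L q \<longleftrightarrow> (\<exists>ts. ts \<noteq> [] \<and> trans_path D q ts q \<and> (\<forall>t\<in>set ts. letter t \<in> L))"
  unfolding on_cycle_def by (rule trancl_letter_step_iff)

lemma on_cycle_if_on_trans_cycle:
  assumes "trans_path D q ts q" "\<forall>t\<in>set ts. letter t \<in> L" "t \<in> set ts"
  shows "on_cycle D L (fst t)"
proof -
  obtain us vs where "ts = us @ t # vs" using split_list[OF assms(3)] by blast
  with assms show ?thesis
    unfolding on_cycle_iff by (intro exI[of _ "t # vs @ us"]) (auto dest: trans_path_rotate)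
qed

section \<open>Complete automata with three states\<close>

lemma trancl_2_cycle: "(p, q) \<in> R \<Longrightarrow> (q, p) \<in> R \<Longrightarrow> (p, p) \<in> R\<^sup>+"
  by (meson r_into_trancl' trancl_into_trancl)

lemma trancl_3_cycle: "(p, q) \<in> R \<Longrightarrow> (q, u) \<in> R \<Longrightarrow> (u, p) \<in> R \<Longrightarrow> (p, p) \<in> R\<^sup>+"
  by (meson r_into_trancl' trancl_into_trancl)

lemma not_trancl_loop_if_trapped:
  assumes "R `` {q} \<subseteq> S" "R `` S \<subseteq> S" "q \<notin> S"
  shows "(q, q) \<notin> R\<^sup>+"
proof
  assume "(q, q) \<in> R\<^sup>+"
  then obtain p where "(q, p) \<in> R" "(p, q) \<in> R\<^sup>*" by (meson tranclD)
  then have "q \<in> R\<^sup>* `` S" using assms(1) by blast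
  with assms show False by (simp add: Image_closed_trancl)
qed

lemma card_3_obtain_third:
  assumes "card Q = 3" "q \<in> Q" "s \<in> Q" "q \<noteq> s"
  obtains t where "Q = {q, s, t}" "distinct [q, s, t]"
proof -
  have "card (Q - {q, s}) = 1" using assms by (simp add: card_Diff_subset)
  then obtain t where t: "Q - {q, s} = {t}" by (rule card_1_singletonE)
  then have "Q = {q, s, t}" "t \<notin> {q, s}" using assms(2,3) by blast+
  with assms(4) that show ?thesis by auto
qed

lemma three_state_cycles_if_back_edge:
  fixes X A B :: "'q rel"
  assumes Q: "Q = {q, s, t}" "distinct [q, s, t]"
    and sub: "X \<union> A \<union> B \<subseteq> Q \<times> Q" and tot: "Q \<subseteq> Domain X"
    and cyc: "(q, q) \<in> (X \<union> A \<union> B)\<^sup>+"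
    and nAB: "(q, q) \<notin> (A \<union> B)\<^sup>+" and nXB: "(q, q) \<notin> (X \<union> B)\<^sup>+"
    and qs: "(q, s) \<in> B" and tq: "(t, q) \<in> X"
  shows "\<forall>u\<in>Q. (u, u) \<in> (X \<union> A)\<^sup>+"
proof -
  have no_X: "(q, q) \<notin> X" "(s, q) \<notin> X" "(q, t) \<notin> X" "(s, t) \<notin> X"
    and no_B: "(q, q) \<notin> B" "(s, q) \<notin> B" "(q, t) \<notin> B" "(s, t) \<notin> B"
    using nXB qs tq trancl_2_cycle[of q s "X \<union> B"] trancl_2_cycle[of q t "X \<union> B"]
      trancl_3_cycle[of q s "X \<union> B" t] by blast+
  have no_A: "(q, q) \<notin> A" "(s, q) \<notin> A"
    using nAB qs trancl_2_cycle[of q s "A \<union> B"] by blast+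
  have X_from_q: "(q, s) \<in> X" and X_from_s: "(s, s) \<in> X"
    using tot sub no_X Q(1) by blast+
  consider "(q, t) \<in> A" | "(s, t) \<in> A" | "(q, t) \<notin> A" "(s, t) \<notin> A" by blast
  then show ?thesis
  proof cases
    case 1
    then have "(q, q) \<in> (X \<union> A)\<^sup>+" "(t, t) \<in> (X \<union> A)\<^sup>+"
      using tq trancl_2_cycle[of q t "X \<union> A"] trancl_2_cycle[of t q "X \<union> A"] by blast+
    with X_from_s Q(1) show ?thesis by blast
  next
    case 2
    then have "(q, q) \<in> (X \<union> A)\<^sup>+" "(s, s) \<in> (X \<union> A)\<^sup>+" "(t, t) \<in> (X \<union> A)\<^sup>+"
      using tq X_from_q trancl_3_cycle[of q s "X \<union> A" t] trancl_3_cycle[of s t "X \<union> A" q]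
        trancl_3_cycle[of t q "X \<union> A" s] by blast+
    with Q(1) show ?thesis by blast
  next
    case 3
    have "(X \<union> A \<union> B) `` {q} \<subseteq> {s}" "(X \<union> A \<union> B) `` {s} \<subseteq> {s}"
      using 3 sub no_X no_A no_B Q(1) by blast+
    with cyc Q(2) show ?thesis using not_trancl_loop_if_trapped[of "X \<union> A \<union> B" q "{s}"] by auto
  qed
qed

lemma three_state_cycles:
  fixes X A B :: "'q rel"
  assumes card: "card Q = 3" and qQ: "q \<in> Q"
    and sub: "X \<union> A \<union> B \<subseteq> Q \<times> Q" and tot: "Q \<subseteq> Domain X" "Q \<subseteq> Domain A" "Q \<subseteq> Domain B"
    and cyc: "(q, q) \<in> (X \<union> A \<union> B)\<^sup>+"
    and nAB: "(q, q) \<notin> (A \<union> B)\<^sup>+" and nXB: "(q, q) \<notin> (X \<union> B)\<^sup>+"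
  shows "\<forall>u\<in>Q. (u, u) \<in> (X \<union> A)\<^sup>+"
proof -
  obtain s where qs: "(q, s) \<in> B" using tot(3) qQ by blast
  have "q \<noteq> s" using qs nAB by blast
  moreover have "s \<in> Q" using qs sub by blast
  ultimately obtain t where Q: "Q = {q, s, t}" "distinct [q, s, t]"
    using card_3_obtain_third[OF card qQ] by blast
  txt \<open>The cycle through q can only enter q from t.\<close>
  have "(s, q) \<notin> X \<union> A \<union> B" "(q, q) \<notin> X \<union> A \<union> B"
    using qs nAB nXB trancl_2_cycle[of q s "A \<union> B"] trancl_2_cycle[of q s "X \<union> B"] by blast+
  moreover obtain p where "(p, q) \<in> X \<union> A \<union> B" using cyc by (meson tranclD2)
  ultimately have tq: "(t, q) \<in> X \<union> A \<union> B" using sub Q(1) by blast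
  consider "(t, q) \<in> X" | "(t, q) \<in> A" | "(t, q) \<in> B" using tq by blast
  then show ?thesis
  proof cases
    case 1
    show ?thesis by (rule three_state_cycles_if_back_edge[OF Q sub tot(1) cyc nAB nXB qs 1])
  next
    case 2
    have "\<forall>u\<in>Q. (u, u) \<in> (A \<union> X)\<^sup>+"
      by (rule three_state_cycles_if_back_edge[OF Q _ tot(2) _ nXB nAB qs 2])
        (use sub cyc in \<open>auto simp: Un_ac\<close>)
    then show ?thesis by (simp add: Un_commute)
  next
    case 3
    have "(q, t) \<notin> X \<union> A \<union> B" "(s, t) \<notin> X \<union> A \<union> B"
      using 3 qs nAB nXB trancl_2_cycle[of q t "A \<union> B"] trancl_2_cycle[of q t "X \<union> B"]
        trancl_3_cycle[of q s "A \<union> B" t] trancl_3_cycle[of q s "X \<union> B" t] by blast+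
    with \<open>(s, q) \<notin> X \<union> A \<union> B\<close> \<open>(q, q) \<notin> X \<union> A \<union> B\<close>
    have "(X \<union> A \<union> B) `` {q} \<subseteq> {s}" "(X \<union> A \<union> B) `` {s} \<subseteq> {s}"
      using sub Q(1) by blast+
    with cyc Q(2) show ?thesis using not_trancl_loop_if_trapped[of "X \<union> A \<union> B" q "{s}"] by auto
  qed
qed

lemma finite_total_rel_has_cycle:
  assumes "finite Q" "Q \<noteq> {}" "R \<subseteq> Q \<times> Q" "Q \<subseteq> Domain R"
  shows "\<exists>q\<in>Q. (q, q) \<in> R\<^sup>+"
proof (rule ccontr)
  assume "\<not> ?thesis"
  then have "acyclic R" using assms(3) unfolding acyclic_def
    by (metis mem_Sigma_iff subsetD tranclD)
  with assms(1,3) have "wf (R\<inverse>)"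
    by (meson finite_SigmaI finite_subset finite_acyclic_wf_converse)
  then obtain q where "q \<in> Q" "\<And>p. (p, q) \<in> R\<inverse> \<Longrightarrow> p \<notin> Q"
    using assms(2) by (metis ex_in_conv wfE_min)
  with assms(3,4) show False by blast
qed

lemma letter_step_subset: "D \<subseteq> Q \<times> \<Sigma> \<times> Q \<Longrightarrow> letter_step D L \<subseteq> Q \<times> Q"
  unfolding letter_step_def by auto

lemma Domain_letter_step: "gba_complete Q \<Sigma> D \<Longrightarrow> a \<in> \<Sigma> \<Longrightarrow> Q \<subseteq> Domain (letter_step D {a})"
  unfolding gba_complete_def letter_step_def by blast

lemma on_cycle_in_states: "D \<subseteq> Q \<times> \<Sigma> \<times> Q \<Longrightarrow> on_cycle D L q \<Longrightarrow> q \<in> Q"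
  unfolding on_cycle_def using letter_step_subset by (metis mem_Sigma_iff subsetD tranclD)

lemma complete_automaton_has_letter_cycle:
  assumes "D \<subseteq> Q \<times> \<Sigma> \<times> Q" "finite Q" "Q \<noteq> {}" "gba_complete Q \<Sigma> D" "a \<in> \<Sigma>"
  shows "\<exists>q\<in>Q. on_cycle D {a} q"
  unfolding on_cycle_def
  using finite_total_rel_has_cycle[OF assms(2,3) letter_step_subset[OF assms(1)]]
    Domain_letter_step[OF assms(4,5)] by blast

lemma three_state_all_on_cycle:
  assumes D: "D \<subseteq> Q \<times> \<Sigma> \<times> Q" and card: "card Q = 3" and comp: "gba_complete Q \<Sigma> D"
    and letters: "x \<in> \<Sigma>" "a \<in> \<Sigma>" "b \<in> \<Sigma>"
    and cyc: "on_cycle D {x, a, b} q" and nab: "\<not> on_cycle D {a, b} q" and nxb: "\<not> on_cycle D {x, b} q"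
  shows "\<forall>u\<in>Q. on_cycle D {x, a} u"
proof -
  have split: "\<And>a b. letter_step D {a, b} = letter_step D {a} \<union> letter_step D {b}"
    "letter_step D {x, a, b} = letter_step D {x} \<union> letter_step D {a} \<union> letter_step D {b}"
    by (metis insert_is_Un letter_step_union sup_assoc)+
  have "\<forall>u\<in>Q. (u, u) \<in> (letter_step D {x} \<union> letter_step D {a})\<^sup>+"
  proof (rule three_state_cycles[OF card on_cycle_in_states[OF D cyc]])
    show "letter_step D {x} \<union> letter_step D {a} \<union> letter_step D {b} \<subseteq> Q \<times> Q"
      using letter_step_subset[OF D] by blast
  qed (use cyc nab nxb Domain_letter_step[OF comp] letters in \<open>simp_all add: on_cycle_def split\<close>)
  then show ?thesis unfolding on_cycle_def split .
qed

lemma three_state_single_letter_cycle: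
  assumes D: "D \<subseteq> Q \<times> \<Sigma> \<times> Q" and card: "card Q = 3" and comp: "gba_complete Q \<Sigma> D"
    and letters: "x \<in> \<Sigma>" "a \<in> \<Sigma>" "b \<in> \<Sigma>"
    and cyc: "on_cycle D {x, a, b} sx" "on_cycle D {x, a, b} sa" "on_cycle D {x, a, b} sb"
    and nx: "\<not> on_cycle D {a, b} sx" and na: "\<not> on_cycle D {x, b} sa" and nb: "\<not> on_cycle D {x, a} sb"
  shows "on_cycle D {x} sx"
proof -
  have in_Q: "sx \<in> Q" "sa \<in> Q" "sb \<in> Q" using on_cycle_in_states[OF D] cyc by blast+
  have xa: "sx \<noteq> sa"
  proof
    assume "sx = sa"
    with nx na have "\<forall>u\<in>Q. on_cycle D {x, a} u"
      using three_state_all_on_cycle[OF D card comp letters cyc(1)] by simp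
    with in_Q(3) nb show False by blast
  qed
  have xb: "sx \<noteq> sb"
  proof
    assume "sx = sb"
    with cyc(1) nx nb have "on_cycle D {x, b, a} sx" "\<not> on_cycle D {b, a} sx" "\<not> on_cycle D {x, a} sx"
      by (simp_all add: insert_commute)
    from three_state_all_on_cycle[OF D card comp letters(1,3,2) this] in_Q(2) na show False by blast
  qed
  have ab: "sa \<noteq> sb"
  proof
    assume "sa = sb"
    with cyc(2) na nb have "on_cycle D {a, b, x} sa" "\<not> on_cycle D {b, x} sa" "\<not> on_cycle D {a, x} sa"
      by (simp_all add: insert_commute)
    from three_state_all_on_cycle[OF D card comp letters(2,3,1) this] in_Q(1) nx show False by blast
  qed
  obtain t where "Q = {sx, sa, t}" using card_3_obtain_third[OF card in_Q(1,2) xa] by blast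
  with in_Q(3) xb ab have Q: "Q = {sx, sa, sb}" by auto
  obtain q where "q \<in> Q" "on_cycle D {x} q"
    using complete_automaton_has_letter_cycle[OF D _ _ comp letters(1)] Q by auto
  moreover have "\<not> on_cycle D {x} sa" "\<not> on_cycle D {x} sb"
    using na nb on_cycle_mono[of D "{x}"] by auto
  ultimately show ?thesis using Q by blast
qed

section \<open>Ultimately periodic words\<close>

lemma prefix_conc_iter:
  assumes "v \<noteq> []"
  shows "prefix (length u + k * length v) (u \<frown> v\<^sup>\<omega>) = u @ concat (replicate k v)"
proof (induction k arbitrary: u)
  case 0
  show ?case by simp
next
  case (Suc k)
  have "u \<frown> v\<^sup>\<omega> = (u @ v) \<frown> v\<^sup>\<omega>"
    using assms by (metis conc_conc iter_unroll length_greater_0_conv)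
  with Suc[of "u @ v"] show ?case by (simp add: add.assoc)
qed

lemma conc_fixpoint_eq_iter:
  assumes fp: "w = v \<frown> w" and "v \<noteq> []"
  shows "w = v\<^sup>\<omega>"
proof
  fix n show "w n = v\<^sup>\<omega> n"
  proof (induction n rule: less_induct)
    case (less n)
    show ?case
    proof (cases "n < length v")
      case True
      then show ?thesis using fp conc_fst by (metis iter_nth mod_less gr_implies_not0 neq0_conv)
    next
      case False
      then have "w n = w (n - length v)" using fp conc_snd by metis
      also have "\<dots> = v\<^sup>\<omega> (n - length v)"
        using less[of "n - length v"] False assms(2) by (cases v) auto
      also have "\<dots> = v\<^sup>\<omega> n" using False assms(2) by (simp add: le_mod_geq)
      finally show ?thesis .
    qed
  qed
qed

lemma iter_rotate:
  assumes "u @ v \<noteq> []"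
  shows "(u @ v)\<^sup>\<omega> = u \<frown> (v @ u)\<^sup>\<omega>"
proof -
  define w where "w = v \<frown> (u @ v)\<^sup>\<omega>"
  have unroll: "(u @ v)\<^sup>\<omega> = u \<frown> w"
    unfolding w_def using assms by (metis conc_conc iter_unroll length_greater_0_conv)
  have "w = v \<frown> (u @ v)\<^sup>\<omega>" by (simp only: w_def)
  also have "\<dots> = v \<frown> u \<frown> w" by (simp only: unroll)
  finally have "w = (v @ u) \<frown> w" by simp
  then have "w = (v @ u)\<^sup>\<omega>" using assms by (intro conc_fixpoint_eq_iter) auto
  with unroll show ?thesis by simp
qed

lemma range_iter_subset: "xs \<noteq> [] \<Longrightarrow> range (xs\<^sup>\<omega>) \<subseteq> set xs"
  by auto

lemma conc_iter_in_omega_power: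
  assumes "u \<in> K" "v \<in> K" "u \<noteq> []" "v \<noteq> []"
  shows "u \<frown> v\<^sup>\<omega> \<in> omega_power K"
proof -
  define p where "p n = (case n of 0 \<Rightarrow> 0 | Suc k \<Rightarrow> length u + k * length v)" for n
  have "strict_mono p" unfolding strict_mono_Suc_iff p_def using assms(3,4) by (simp split: nat.split)
  moreover have "map (u \<frown> v\<^sup>\<omega>) [p n..<p (Suc n)] \<in> K" for n
  proof (cases n)
    case 0
    then show ?thesis
      using assms(1) prefix_conc_length[of u "v\<^sup>\<omega>"] unfolding subsequence_def by (simp add: p_def)
  next
    case (Suc k)
    have "map (u \<frown> v\<^sup>\<omega>) [p n..<p (Suc n)] = v"
      by (rule nth_equalityI) (use assms(4) in \<open>simp_all add: p_def Suc algebra_simps\<close>)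
    then show ?thesis using assms(2) by simp
  qed
  moreover have "p 0 = 0" by (simp add: p_def)
  ultimately show ?thesis unfolding omega_power_def by blast
qed

lemma iter_in_omega_power_star_concat:
  assumes "set (u @ y @ z) \<subseteq> X" "y \<in> Y" "y \<noteq> []"
  shows "(u @ y @ z)\<^sup>\<omega> \<in> omega_power (star_concat X Y)"
proof -
  have "set u \<subseteq> X" "set (z @ u) \<subseteq> X" using assms(1) by auto
  then have "u @ y \<in> star_concat X Y" "(z @ u) @ y \<in> star_concat X Y"
    using assms(2) unfolding star_concat_def by blast+
  then have "(u @ y) \<frown> (z @ u @ y)\<^sup>\<omega> \<in> omega_power (star_concat X Y)"
    using assms(3) by (intro conc_iter_in_omega_power) auto
  then show ?thesis using iter_rotate[of "u @ y" z] assms(3) by simp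
qed

lemma omega_power_star_concat_factor:
  assumes "w \<in> omega_power (star_concat X Y)"
  obtains n y where "n \<ge> m" "y \<in> Y" "w [n \<rightarrow> n + length y] = y"
proof -
  obtain p where p: "strict_mono p" "w [p m \<rightarrow> p (Suc m)] \<in> star_concat X Y"
    using assms unfolding omega_power_def subsequence_def by blast
  then obtain u y where uy: "w [p m \<rightarrow> p (Suc m)] = u @ y" "y \<in> Y"
    unfolding star_concat_def by blast
  then have "p (Suc m) = p m + length u + length y"
    using p(1)
    by (metis length_append subsequence_length strict_mono_Suc_iff le_add_diff_inverse less_imp_le add.assoc)
  moreover have "drop (length u) (w [p m \<rightarrow> p (Suc m)]) = y" using uy(1) by simp
  ultimately have "w [p m + length u \<rightarrow> p m + length u + length y] = y" by simp
  moreover have "m \<le> p m + length u" using strict_mono_imp_increasing[OF p(1)] le_add1 order_trans by blast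
  ultimately show ?thesis using that uy(2) by blast
qed

lemma successively_snoc_if_left:
  "\<forall>x\<in>set xs. \<forall>y. P x y \<Longrightarrow> successively P (xs @ [y])"
  by (induction xs) (auto simp: successively_Cons)

lemma successively_concat:
  assumes "\<forall>xs\<in>set xss. xs \<noteq> [] \<and> successively P xs \<and> (\<forall>x. P x (hd xs))"
  shows "successively P (concat xss)"
  using assms
proof (induction xss)
  case (Cons xs xss)
  then show ?case by (cases xss) (auto simp: successively_append_iff)
qed simp

lemma successively_iter:
  assumes "successively P xs" "xs \<noteq> []" "P (last xs) (hd xs)"
  shows "P (xs\<^sup>\<omega> n) (xs\<^sup>\<omega> (Suc n))"
proof -
  define i where "i = n mod length xs"
  have "i < length xs" using assms(2) unfolding i_def by simp
  show ?thesis
  proof (cases "Suc i < length xs")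
    case True
    then have "Suc n mod length xs = Suc i" unfolding i_def by (simp add: mod_Suc)
    with True show ?thesis using successively_nth[OF assms(1)] assms(2) unfolding i_def by simp
  next
    case False
    with \<open>i < length xs\<close> have "i = length xs - 1" by simp
    then have "xs ! i = last xs" "Suc n mod length xs = 0"
      using assms(2) unfolding i_def by (simp_all add: last_conv_nth mod_Suc)
    with assms show ?thesis unfolding i_def by (simp add: hd_conv_nth)
  qed
qed

section \<open>Lassos\<close>

lemma trans_path_lasso:
  assumes pre: "trans_path D p pre q" and cyc: "trans_path D q cyc q" "cyc \<noteq> []"
  defines "\<tau> \<equiv> pre \<frown> cyc\<^sup>\<omega>"
  shows "fst (\<tau> 0) = p" and "\<tau> i \<in> D" and "snd (snd (\<tau> i)) = fst (\<tau> (Suc i))"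
proof -
  txt \<open>The first transitions of the lasso form the path pre @ cyc @ ... @ cyc.\<close>
  define N where "N = length pre + Suc (Suc i) * length cyc"
  have "Suc i < N" using cyc(2) unfolding N_def by (cases cyc) auto
  have "trans_path D p (pre @ concat (replicate (Suc (Suc i)) cyc)) q"
    unfolding trans_path_append using pre trans_path_replicate[OF cyc(1)] by blast
  then have path: "trans_path D p (prefix N \<tau>) q"
    unfolding N_def \<tau>_def prefix_conc_iter[OF cyc(2)] .
  have nth: "prefix N \<tau> ! j = \<tau> j" if "j < N" for j using that by simp
  show "fst (\<tau> 0) = p"
    using path \<open>Suc i < N\<close> nth[of 0] by (cases "prefix N \<tau>") auto
  show "\<tau> i \<in> D"
    using trans_path_subset[OF path] \<open>Suc i < N\<close> nth[of i]
    by (metis Suc_lessD nth_mem subsequence_length subsetD diff_zero)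
  show "snd (snd (\<tau> i)) = fst (\<tau> (Suc i))"
    using trans_path_link[OF path, of i] \<open>Suc i < N\<close> nth[of i] nth[of "Suc i"] by simp
qed

lemma lasso_accepted:
  assumes D: "D \<subseteq> Q \<times> \<Sigma> \<times> Q"
    and pre: "trans_path D qi pre q" and cyc: "trans_path D q cyc q" "cyc \<noteq> []"
    and colours: "\<forall>c\<in>C. \<exists>t\<in>set cyc. c \<in> col t"
  shows "(\<lambda>n. letter ((pre \<frown> cyc\<^sup>\<omega>) n)) \<in> gba_lang \<Sigma> qi D col C"
proof -
  define \<tau> where "\<tau> = pre \<frown> cyc\<^sup>\<omega>"
  define r where "r n = fst (\<tau> n)" for n
  define w where "w n = letter (\<tau> n)" for n
  have step: "(r n, w n, r (Suc n)) = \<tau> n" for n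
    using trans_path_lasso(3)[OF pre cyc] unfolding r_def w_def \<tau>_def by (metis prod.collapse)
  have run: "is_run qi D w r"
    unfolding is_run_def step using trans_path_lasso(1,2)[OF pre cyc] unfolding r_def \<tau>_def by simp
  have "range w \<subseteq> \<Sigma>"
  proof
    fix a assume "a \<in> range w"
    then obtain n where "a = letter (\<tau> n)" unfolding w_def by blast
    moreover have "\<tau> n \<in> Q \<times> \<Sigma> \<times> Q" using trans_path_lasso(2)[OF pre cyc] D unfolding \<tau>_def by blast
    ultimately show "a \<in> \<Sigma>" by (simp add: mem_Times_iff)
  qed
  moreover have "gb_accepting col C w r"
    unfolding gb_accepting_def step
  proof
    fix c assume "c \<in> C"
    then obtain t where "t \<in> set cyc" "c \<in> col t" using colours by blast
    then have "\<exists>\<^sub>\<infinity>n. \<tau> n = t"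
      using cyc(2) unfolding \<tau>_def by (simp add: limit_iff_frequent[symmetric])
    then have "\<exists>\<^sub>\<infinity>n. c \<in> col (\<tau> n)" by (rule INFM_mono) (use \<open>c \<in> col t\<close> in simp)
    then show "infinite {n. c \<in> col (\<tau> n)}" by (simp add: INFM_iff_infinite)
  qed
  ultimately show ?thesis using run unfolding gba_lang_def w_def \<tau>_def by blast
qed

lemma trans_path_run_segment:
  assumes "\<forall>k. (r k, w k, r (Suc k)) \<in> D" "i \<le> j"
  shows "trans_path D (r i) (map (\<lambda>k. (r k, w k, r (Suc k))) [i..<j]) (r j)"
  using assms(2)
proof (induction j rule: dec_induct)
  case (step j)
  then show ?case using assms(1) by (simp add: trans_path_append)
qed simp

lemma frequent_return_interval:
  fixes r :: "nat \<Rightarrow> 'q"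
  assumes "finite C" "\<forall>c\<in>C. \<exists>\<^sub>\<infinity>k. P c k" "\<exists>\<^sub>\<infinity>k. r k = q"
  obtains i j where "i < j" "r i = q" "r j = q" "\<forall>c\<in>C. \<exists>k\<in>{i..<j}. P c k"
proof -
  obtain i where i: "r i = q" using assms(3) by (auto dest: INFM_EX)
  have "\<forall>c\<in>C. \<exists>k\<ge>i. P c k" using assms(2) by (simp add: INFM_nat_le)
  then obtain f where f: "\<forall>c\<in>C. f c \<ge> i \<and> P c (f c)" by metis
  obtain j where j: "j \<ge> Suc (Max (insert i (f ` C)))" "r j = q"
    using assms(3) by (auto simp: INFM_nat_le)
  have "i < j" "\<forall>c\<in>C. f c < j"
    using j(1) assms(1) by (simp_all add: Suc_le_eq)
  with f i j(2) that show ?thesis by fastforce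
qed

lemma accepting_run_obtain_lasso:
  assumes D: "D \<subseteq> Q \<times> \<Sigma> \<times> Q" and fin: "finite Q" "finite C"
    and run: "is_run qi D w r" and acc: "gb_accepting col C w r"
  obtains pre cyc q where "trans_path D qi pre q" "trans_path D q cyc q" "cyc \<noteq> []"
    "\<forall>c\<in>C. \<exists>t\<in>set cyc. c \<in> col t" "\<forall>t\<in>set cyc. letter t \<in> range w"
proof -
  define \<tau> where "\<tau> k = (r k, w k, r (Suc k))" for k
  have steps: "\<forall>k. \<tau> k \<in> D" using run unfolding is_run_def \<tau>_def by blast
  then have "range r \<subseteq> Q" using D unfolding \<tau>_def by blast
  then obtain q where "q \<in> limit r" using limit_nonempty fin(1) finite_subset by metis
  have "\<forall>c\<in>C. \<exists>\<^sub>\<infinity>k. c \<in> col (\<tau> k)"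
    using acc unfolding gb_accepting_def \<tau>_def by (simp add: INFM_iff_infinite)
  moreover have "\<exists>\<^sub>\<infinity>k. r k = q" using \<open>q \<in> limit r\<close> by (simp add: limit_iff_frequent)
  ultimately obtain i j where ij: "i < j" "r i = q" "r j = q" "\<forall>c\<in>C. \<exists>k\<in>{i..<j}. c \<in> col (\<tau> k)"
    by (rule frequent_return_interval[OF fin(2)])
  have "trans_path D (r 0) (map \<tau> [0..<i]) (r i)" "trans_path D (r i) (map \<tau> [i..<j]) (r j)"
    using trans_path_run_segment[OF steps[unfolded \<tau>_def]] ij(1) unfolding \<tau>_def by simp_all
  moreover have "r 0 = qi" using run unfolding is_run_def by simp
  moreover have "\<forall>c\<in>C. \<exists>t\<in>set (map \<tau> [i..<j]). c \<in> col t" using ij(4) by auto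
  moreover have "\<forall>t\<in>set (map \<tau> [i..<j]). letter t \<in> range w" by (auto simp: \<tau>_def)
  ultimately show ?thesis using that ij(1-3) by simp
qed

section \<open>The languages L_v and L_G\<close>

lemma not_in_lang_v:
  assumes nbhd: "\<forall>n\<ge>m. w n \<in> closed_nbhd V E l" and no_double: "\<forall>n\<ge>m. w n = l \<longrightarrow> w (Suc n) \<noteq> l"
  shows "w \<notin> lang_v V E l"
proof
  assume "w \<in> lang_v V E l"
  then consider "w \<in> omega_power (star_concat V {[l, l]})"
    | "w \<in> omega_power (star_concat V {[a] | a. a \<in> V - closed_nbhd V E l})"
    unfolding lang_v_def by blast
  then show False
  proof cases
    case 1
    then obtain n where "n \<ge> m" "w [n \<rightarrow> n + 2] = [l, l]"
      by (rule omega_power_star_concat_factor[where m = m]) auto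
    then have "w n = l" "w (Suc n) = l" by (simp_all add: subsequence_def upt_rec)
    with no_double \<open>n \<ge> m\<close> show False by blast
  next
    case 2
    then obtain n a where "n \<ge> m" "a \<notin> closed_nbhd V E l" "w [n \<rightarrow> n + 1] = [a]"
      by (rule omega_power_star_concat_factor[where m = m]) auto
    then show False using nbhd by (auto simp: subsequence_def)
  qed
qed

lemma lasso_state_not_on_neighbour_cycle:
  assumes D: "D \<subseteq> Q \<times> V \<times> Q" and lang: "gba_lang V qi D col C \<subseteq> lang_v V E l"
    and pre: "trans_path D qi pre q" and cyc: "trans_path D q cyc q" "cyc \<noteq> []"
    and colours: "\<forall>c\<in>C. \<exists>t\<in>set cyc. c \<in> col t"
    and letters: "\<forall>t\<in>set cyc. letter t \<in> closed_nbhd V E l"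
  shows "\<exists>t\<in>set cyc. \<not> on_cycle D (closed_nbhd V E l - {l}) (fst t)"
proof (rule ccontr)
  let ?N = "closed_nbhd V E l - {l}"
  let ?P = "\<lambda>t t'. letter t = l \<longrightarrow> letter t' \<noteq> l"
  assume "\<not> ?thesis"
  then obtain loop where loop: "\<forall>t\<in>set cyc. loop t \<noteq> [] \<and>
      trans_path D (fst t) (loop t) (fst t) \<and> (\<forall>s\<in>set (loop t). letter s \<in> ?N)"
    unfolding on_cycle_iff by metis
  txt \<open>Letter l now only occurs right after a letter different from l.\<close>
  define cyc' where "cyc' = concat (map (\<lambda>t. loop t @ [t]) cyc)"
  have path: "trans_path D q cyc' q"
    unfolding cyc'_def by (rule trans_path_insert_loops[OF cyc(1)]) (use loop in blast)
  have ne: "cyc' \<noteq> []" using cyc(2) unfolding cyc'_def by (cases cyc) auto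
  have colours': "\<forall>c\<in>C. \<exists>t\<in>set cyc'. c \<in> col t" using colours unfolding cyc'_def by fastforce
  have letters': "\<forall>t\<in>set cyc'. letter t \<in> closed_nbhd V E l"
    using letters loop unfolding cyc'_def by auto
  have "successively ?P cyc'"
    unfolding cyc'_def using loop by (intro successively_concat) (auto intro: successively_snoc_if_left)
  moreover have "letter (hd cyc') \<noteq> l" using loop cyc(2) unfolding cyc'_def by (cases cyc) auto
  ultimately have no_double: "?P (cyc'\<^sup>\<omega> n) (cyc'\<^sup>\<omega> (Suc n))" for n
    using successively_iter[of ?P cyc' n] ne by blast
  define w where "w = (\<lambda>n. letter ((pre \<frown> cyc'\<^sup>\<omega>) n))"
  have "w \<in> lang_v V E l" using lasso_accepted[OF D pre path ne colours'] lang unfolding w_def by blast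
  moreover have "w \<notin> lang_v V E l"
  proof (rule not_in_lang_v[where m = "length pre"])
    show "\<forall>n\<ge>length pre. w n \<in> closed_nbhd V E l"
      using letters' ne unfolding w_def by simp
    show "\<forall>n\<ge>length pre. w n = l \<longrightarrow> w (Suc n) \<noteq> l"
      using no_double unfolding w_def by (simp add: Suc_diff_le)
  qed
  ultimately show False by blast
qed

lemma iter_in_lang_v_if_double:
  "set (u @ [v, v] @ z) \<subseteq> V \<Longrightarrow> (u @ [v, v] @ z)\<^sup>\<omega> \<in> lang_v V E v"
  unfolding lang_v_def using iter_in_omega_power_star_concat[of u "[v, v]" z V "{[v, v]}"] by blast

lemma iter_in_lang_v_if_non_neighbour:
  assumes "set xs \<subseteq> V" "y \<in> set xs" "y \<notin> closed_nbhd V E v"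
  shows "xs\<^sup>\<omega> \<in> lang_v V E v"
proof -
  obtain u z where xs: "xs = u @ [y] @ z" using split_list[OF assms(2)] by auto
  have "[y] \<in> {[a] | a. a \<in> V - closed_nbhd V E v}" using assms by auto
  then show ?thesis
    unfolding lang_v_def using iter_in_omega_power_star_concat[of u "[y]" z V] assms(1) xs by auto
qed

lemma triangle_word_in_lang_G:
  assumes k4: "four_clique_free V E" and V: "x \<in> V" "a \<in> V" "b \<in> V" and d: "distinct [x, a, b]"
    and e: "{x, a} \<in> E" "{x, b} \<in> E" "{a, b} \<in> E"
  shows "[x, x, a, a, b, b]\<^sup>\<omega> \<in> lang_G V E"
proof -
  have set: "set [x, x, a, a, b, b] \<subseteq> V" using V by simp
  have "[x, x, a, a, b, b]\<^sup>\<omega> \<in> lang_v V E v" if "v \<in> V" for v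
  proof -
    consider "v = x" | "v = a" | "v = b" | "v \<notin> {x, a, b}" by blast
    then show ?thesis
    proof cases
      case 1
      then show ?thesis using iter_in_lang_v_if_double[of "[]" v "[a, a, b, b]"] set by simp
    next
      case 2
      then show ?thesis using iter_in_lang_v_if_double[of "[x, x]" v "[b, b]"] set by simp
    next
      case 3
      then show ?thesis using iter_in_lang_v_if_double[of "[x, x, a, a]" v "[]"] set by simp
    next
      case 4
      have "\<not> {x, a, b} \<subseteq> closed_nbhd V E v"
      proof
        assume "{x, a, b} \<subseteq> closed_nbhd V E v"
        then have "{v, x} \<in> E" "{v, a} \<in> E" "{v, b} \<in> E" using 4 unfolding closed_nbhd_def by auto
        then have "is_k_clique V E 4 {v, x, a, b}"
          using 4 d V e that unfolding is_k_clique_def is_clique_def by (auto simp: insert_commute)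
        with k4 show False unfolding four_clique_free_def by blast
      qed
      then obtain y where "y \<in> set [x, x, a, a, b, b]" "y \<notin> closed_nbhd V E v" by auto
      with set show ?thesis by (rule iter_in_lang_v_if_non_neighbour)
    qed
  qed
  moreover have "range ([x, x, a, a, b, b]\<^sup>\<omega>) \<subseteq> V"
    by (rule order_trans[OF range_iter_subset set]) simp
  ultimately show ?thesis unfolding lang_G_def by blast
qed

lemma triangle_full_obtain_triangle:
  assumes "triangle_full V E" "x \<in> V"
  obtains a b where "a \<in> V" "b \<in> V" "distinct [x, a, b]" "{x, a} \<in> E" "{x, b} \<in> E" "{a, b} \<in> E"
proof -
  obtain K where K: "K \<subseteq> V" "card K = 3" "is_clique E K" "x \<in> K"
    using assms unfolding triangle_full_def is_k_clique_def by blast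
  then have "card (K - {x}) = 2" by simp
  then obtain a where "a \<in> K" "a \<noteq> x" by (metis card_2_iff' Diff_iff singletonI)
  then obtain b where "K = {x, a, b}" "distinct [x, a, b]" using card_3_obtain_third[OF K(2,4)] by metis
  with K(1,3) show ?thesis unfolding is_clique_def by (intro that[of a b]) auto
qed

lemma triangle_vertex_state:
  assumes gba: "is_gba Q V qi D col C" and comp: "gba_complete Q V D" and card: "card Q = 3"
    and lang: "gba_lang V qi D col C = lang_G V E" and k4: "four_clique_free V E"
    and V: "x \<in> V" "a \<in> V" "b \<in> V" and d: "distinct [x, a, b]"
    and e: "{x, a} \<in> E" "{x, b} \<in> E" "{a, b} \<in> E"
  shows "\<exists>q. on_cycle D {x} q \<and> \<not> on_cycle D (closed_nbhd V E x - {x}) q"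
proof -
  have D: "D \<subseteq> Q \<times> V \<times> Q" and fin: "finite Q" "finite C" using gba unfolding is_gba_def by auto
  define w where "w = [x, x, a, a, b, b]\<^sup>\<omega>"
  have "w \<in> gba_lang V qi D col C" using triangle_word_in_lang_G[OF k4 V d e] lang unfolding w_def by simp
  then obtain r where run: "is_run qi D w r" and acc: "gb_accepting col C w r"
    unfolding gba_lang_def by blast
  obtain pre cyc q where lasso: "trans_path D qi pre q" "trans_path D q cyc q" "cyc \<noteq> []"
    and colours: "\<forall>c\<in>C. \<exists>t\<in>set cyc. c \<in> col t" and letters: "\<forall>t\<in>set cyc. letter t \<in> range w"
    by (rule accepting_run_obtain_lasso[OF D fin run acc])
  have "range w \<subseteq> {x, a, b}" unfolding w_def by (rule order_trans[OF range_iter_subset]) auto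
  with letters have letters: "\<forall>t\<in>set cyc. letter t \<in> {x, a, b}" by blast
  have state: "\<exists>s. on_cycle D {x, a, b} s \<and> \<not> on_cycle D (closed_nbhd V E l - {l}) s"
    if "l \<in> {x, a, b}" for l
  proof -
    have "{x, a, b} \<subseteq> closed_nbhd V E l"
      using that V e unfolding closed_nbhd_def by (auto simp: insert_commute)
    with letters have "\<forall>t\<in>set cyc. letter t \<in> closed_nbhd V E l" by blast
    moreover have "gba_lang V qi D col C \<subseteq> lang_v V E l" using lang that V unfolding lang_G_def by auto
    ultimately obtain t where "t \<in> set cyc" "\<not> on_cycle D (closed_nbhd V E l - {l}) (fst t)"
      using lasso_state_not_on_neighbour_cycle[OF D _ lasso colours] by blast
    moreover have "on_cycle D {x, a, b} (fst t)"
      using on_cycle_if_on_trans_cycle[OF lasso(2) letters \<open>t \<in> set cyc\<close>] .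
    ultimately show ?thesis by blast
  qed
  obtain sx sa sb where
    sx: "on_cycle D {x, a, b} sx" "\<not> on_cycle D (closed_nbhd V E x - {x}) sx" and
    sa: "on_cycle D {x, a, b} sa" "\<not> on_cycle D (closed_nbhd V E a - {a}) sa" and
    sb: "on_cycle D {x, a, b} sb" "\<not> on_cycle D (closed_nbhd V E b - {b}) sb"
    using state by (metis insertCI)
  have nbhd: "{a, b} \<subseteq> closed_nbhd V E x - {x}" "{x, b} \<subseteq> closed_nbhd V E a - {a}"
    "{x, a} \<subseteq> closed_nbhd V E b - {b}"
    using V d e unfolding closed_nbhd_def by (auto simp: insert_commute)
  have "\<not> on_cycle D {a, b} sx" "\<not> on_cycle D {x, b} sa" "\<not> on_cycle D {x, a} sb"
    using on_cycle_mono[OF _ nbhd(1)] on_cycle_mono[OF _ nbhd(2)] on_cycle_mono[OF _ nbhd(3)]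
      sx(2) sa(2) sb(2) by metis+
  then have "on_cycle D {x} sx"
    using three_state_single_letter_cycle[OF D card comp V sx(1) sa(1) sb(1)] by blast
  with sx(2) show ?thesis by blast
qed

lemma three_colourable_if_separating_map:
  assumes "card Q = 3" "\<forall>v\<in>V. f v \<in> Q" "\<forall>v\<in>V. \<forall>v'\<in>V. {v, v'} \<in> E \<longrightarrow> f v \<noteq> f v'"
  shows "three_colourable V E"
proof -
  obtain h where h: "bij_betw h Q {1, 2, 3 :: nat}"
    using finite_same_card_bij[of Q "{1, 2, 3 :: nat}"] assms(1) card.infinite by fastforce
  have "\<forall>v\<in>V. h (f v) \<in> {1, 2, 3}" using h assms(2) bij_betw_apply by fastforce
  moreover have "\<forall>v\<in>V. \<forall>v'\<in>V. {v, v'} \<in> E \<longrightarrow> h (f v) \<noteq> h (f v')"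
    using assms(2,3) by (simp add: inj_on_eq_iff[OF bij_betw_imp_inj_on[OF h]])
  ultimately show ?thesis unfolding three_colourable_def by (intro exI[of _ "\<lambda>v. h (f v)"]) blast
qed

lemma neighbour_in_open_nbhd:
  "finite_graph V E \<Longrightarrow> {v, v'} \<in> E \<Longrightarrow> v' \<in> V \<Longrightarrow> v' \<in> closed_nbhd V E v - {v}"
  unfolding finite_graph_def closed_nbhd_def by (cases "v = v'") auto

theorem lemma45:
  fixes V :: "'v set" and E :: "'v set set"
  assumes "finite_graph V E"
    and "triangle_full V E"
    and "four_clique_free V E"
    and "\<exists>(Q :: 'q set) qi \<Delta> (col :: 'q \<times> 'v \<times> 'q \<Rightarrow> 'c set) C.
           is_gba Q V qi \<Delta> col C \<and> gba_complete Q V \<Delta> \<and> card Q = 3 \<and>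
           gba_lang V qi \<Delta> col C = lang_G V E"
  shows "three_colourable V E"
proof -
  obtain Q :: "'q set" and qi D and col :: "'q \<times> 'v \<times> 'q \<Rightarrow> 'c set" and C where
    gba: "is_gba Q V qi D col C" and comp: "gba_complete Q V D" and card: "card Q = 3"
    and lang: "gba_lang V qi D col C = lang_G V E"
    using assms(4) by blast
  have "\<forall>v\<in>V. \<exists>q. on_cycle D {v} q \<and> \<not> on_cycle D (closed_nbhd V E v - {v}) q"
  proof
    fix v assume "v \<in> V"
    then obtain a b where "a \<in> V" "b \<in> V" "distinct [v, a, b]" "{v, a} \<in> E" "{v, b} \<in> E" "{a, b} \<in> E"
      using triangle_full_obtain_triangle[OF assms(2)] by metis
    with \<open>v \<in> V\<close> show "\<exists>q. on_cycle D {v} q \<and> \<not> on_cycle D (closed_nbhd V E v - {v}) q"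
      by (rule triangle_vertex_state[OF gba comp card lang assms(3)])
  qed
  then obtain f where f: "\<forall>v\<in>V. on_cycle D {v} (f v) \<and> \<not> on_cycle D (closed_nbhd V E v - {v}) (f v)"
    by metis
  have "f v \<noteq> f v'" if "v \<in> V" "v' \<in> V" "{v, v'} \<in> E" for v v'
    using f that on_cycle_mono[of D "{v'}" "f v'"] neighbour_in_open_nbhd[OF assms(1) that(3,2)] by auto
  moreover have "\<forall>v\<in>V. f v \<in> Q" using f on_cycle_in_states gba unfolding is_gba_def by metis
  ultimately show ?thesis using three_colourable_if_separating_map[OF card] by blast
qed

end
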